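(* Let $K:[0,\infty)\to(0,\infty)$ be non-increasing with $K(0)=1$, and for $\sigma>0$ let $K_\sigma(x)=K(x/\sigma)$. Let $\mathcal{X}=\{\mathbf{x}_1,\dots,\mathbf{x}_n\}\subset\mathbb{R}^d$ and let $\mathcal{C}_1,\dots,\mathcal{C}_k$ be a partition of $\mathcal{X}$ into nonempty sets. For each $l\in[k]$, suppose $\mathcal{C}_l$ is connected at distance $\delta_l$. Let $\mathbf{U}\in\mathbb{R}^{n\times n}$ have as columns the eigenvectors of the unnormalised Laplacian $\mathbf{L}$ of the graph $\mathcal{G}=(\mathcal{X},K_\sigma)$. Then for each $i,j\in[n]$, $l\in[k]$ with $\mathbf{x}_i,\mathbf{x}_j\in\mathcal{C}_l$, $$\|\mathbf{U}_{i,1:k}-\mathbf{U}_{j,1:k}\|\le \max_{m\in[k]} n^{1.5}k^{0.5}\sqrt{\frac{K_\sigma(d(\mathcal{C}_m,\mathcal{X}\setminus\mathcal{C}_m))}{K_\sigma(\delta_l)}}.$$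
   Context: $[n]=\{1,\dots,n\}$; $\|\cdot\|$ is the Euclidean norm and $d(\mathbf{x},\mathbf{y})=\|\mathbf{x}-\mathbf{y}\|$. For sets $S,U\subset\mathbb{R}^d$, $d(S,U)=\inf_{\mathbf{x}\in S,\mathbf{y}\in U}d(\mathbf{x},\mathbf{y})$, with the convention $d(S,\emptyset)=\infty$. A set $S\subset\mathbb{R}^d$ is connected at distance $\delta$ if there is no partition of $S$ into $S_1,S_2$ with $d(S_1,S_2)>\delta$. The graph $\mathcal{G}=(\mathcal{X},K_\sigma)$ has affinity matrix $\mathbf{A}_{ij}=K_\sigma(\|\mathbf{x}_i-\mathbf{x}_j\|)$ (including $i=j$), degree matrix $\mathbf{D}$ diagonal with $\mathbf{D}_{ii}=\sum_j\mathbf{A}_{ij}$, and unnormalised Laplacian $\mathbf{L}=\mathbf{D}-\mathbf{A}$. "The eigenvectors" means an orthonormal eigenbasis arranged as columns so that the corresponding eigenvalues are in nondecreasing order. $\mathbf{U}_{i,1:k}$ denotes the first $k$ entries of row $i$. *)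

theory Defs
  imports "HOL-Analysis.Analysis"
begin

text \<open>Points x_0..x_{n-1} (0-based) in R^d, matrices as nat => nat => real with indices < n.\<close>

definition Ksig :: "(real \<Rightarrow> real) \<Rightarrow> real \<Rightarrow> real \<Rightarrow> real" where
  "Ksig K \<sigma> t = K (t / \<sigma>)"

text \<open>K_sigma evaluated at the set distance d(S,T), with d(S,{}) = infinity and
  K_sigma(infinity) read as the limit value inf_{t>=0} K t.\<close>
definition Ksig_setdist :: "(real \<Rightarrow> real) \<Rightarrow> real \<Rightarrow> 'a::metric_space set \<Rightarrow> 'a set \<Rightarrow> real" where
  "Ksig_setdist K \<sigma> S T = (if T = {} then (INF t\<in>{0..}. K t) else Ksig K \<sigma> (setdist S T))"

definition connected_at_dist :: "'a::metric_space set \<Rightarrow> real \<Rightarrow> bool" where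
  "connected_at_dist S \<delta> \<longleftrightarrow>
     \<not> (\<exists>S1 S2. S1 \<noteq> {} \<and> S2 \<noteq> {} \<and> S1 \<union> S2 = S \<and> S1 \<inter> S2 = {} \<and> setdist S1 S2 > \<delta>)"

definition affinity :: "(real \<Rightarrow> real) \<Rightarrow> real \<Rightarrow> (nat \<Rightarrow> 'a::metric_space) \<Rightarrow> nat \<Rightarrow> nat \<Rightarrow> real" where
  "affinity K \<sigma> x i j = Ksig K \<sigma> (dist (x i) (x j))"

definition degree_mat :: "(real \<Rightarrow> real) \<Rightarrow> real \<Rightarrow> (nat \<Rightarrow> 'a::metric_space) \<Rightarrow> nat \<Rightarrow> nat \<Rightarrow> nat \<Rightarrow> real" where
  "degree_mat K \<sigma> x n i j = (if i = j then (\<Sum>l<n. affinity K \<sigma> x i l) else 0)"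

definition laplacian :: "(real \<Rightarrow> real) \<Rightarrow> real \<Rightarrow> (nat \<Rightarrow> 'a::metric_space) \<Rightarrow> nat \<Rightarrow> nat \<Rightarrow> nat \<Rightarrow> real" where
  "laplacian K \<sigma> x n i j = degree_mat K \<sigma> x n i j - affinity K \<sigma> x i j"

definition sorted_eigenbasis :: "nat \<Rightarrow> (nat \<Rightarrow> nat \<Rightarrow> real) \<Rightarrow> (nat \<Rightarrow> nat \<Rightarrow> real) \<Rightarrow> bool" where
  "sorted_eigenbasis n M U \<longleftrightarrow>
     (\<forall>a<n. \<forall>b<n. (\<Sum>i<n. U i a * U i b) = (if a = b then 1 else 0)) \<and>
     (\<exists>lam :: nat \<Rightarrow> real.
        (\<forall>a b. a \<le> b \<longrightarrow> b < n \<longrightarrow> lam a \<le> lam b) \<and>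
        (\<forall>a<n. \<forall>i<n. (\<Sum>j<n. M i j * U j a) = lam a * U i a))"

definition is_partition :: "'a set \<Rightarrow> (nat \<Rightarrow> 'a set) \<Rightarrow> nat \<Rightarrow> bool" where
  "is_partition X C k \<longleftrightarrow>
     (\<forall>l<k. C l \<noteq> {}) \<and> (\<Union>l<k. C l) = X \<and> (\<forall>l<k. \<forall>m<k. l \<noteq> m \<longrightarrow> C l \<inter> C m = {})"

definition row_dist :: "(nat \<Rightarrow> nat \<Rightarrow> real) \<Rightarrow> nat \<Rightarrow> nat \<Rightarrow> nat \<Rightarrow> real" where
  "row_dist U k i j = sqrt (\<Sum>a<k. (U i a - U j a)\<^sup>2)"

end

theory Submission
  imports Defs "Jordan_Normal_Form.Determinant"
begin

(* Write e_m for the normalised indicator vector of the cluster C_m and eps_m for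
   K_sigma(d(C_m, X - C_m)), which bounds every affinity leaving C_m.  The e_m are k orthonormal
   vectors with e_m' L e_m <= n eps_m.  As the eigenvalues of L are nonnegative and sorted, a
   Ky Fan type comparison gives lambda_a <= lambda_k <= sum_m e_m' L e_m <= k n max_m eps_m for
   every a <= k.  On the other hand, since C_l is connected at distance delta_l, a spanning tree of
   C_l with edges of affinity at least K_sigma(delta_l) and Cauchy-Schwarz along its paths give
   K_sigma(delta_l) (u_i - u_j)^2 <= n u' L u for every vector u and all x_i, x_j in C_l.  Applying
   this to the first k eigenvectors and summing over the coordinates yields the bound. *)

definition quad_form :: "nat \<Rightarrow> (nat \<Rightarrow> nat \<Rightarrow> real) \<Rightarrow> (nat \<Rightarrow> real) \<Rightarrow> real" where
  "quad_form n M v = (\<Sum>i<n. v i * (\<Sum>j<n. M i j * v j))"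

lemma orthonormal_columns_imp_orthonormal_rows:
  fixes U :: "nat \<Rightarrow> nat \<Rightarrow> real"
  assumes orth: "\<forall>a<n. \<forall>b<n. (\<Sum>i<n. U i a * U i b) = (if a = b then 1 else 0)"
    and "i < n" "j < n"
  shows "(\<Sum>a<n. U i a * U j a) = (if i = j then 1 else 0)"
proof -
  define A :: "real mat" where "A = mat n n (\<lambda>(a, b). U b a)"
  define B :: "real mat" where "B = mat n n (\<lambda>(a, b). U a b)"
  have A: "A \<in> carrier_mat n n" and B: "B \<in> carrier_mat n n" by (auto simp: A_def B_def)
  have "A * B = 1\<^sub>m n"
  proof (rule eq_matI)
    fix a b assume ab: "a < dim_row (1\<^sub>m n)" "b < dim_col (1\<^sub>m n)"
    then have "(A * B) $$ (a, b) = (\<Sum>i<n. U i a * U i b)"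
      by (simp add: A_def B_def scalar_prod_def lessThan_atLeast0)
    also have "\<dots> = 1\<^sub>m n $$ (a, b)" using orth ab by simp
    finally show "(A * B) $$ (a, b) = 1\<^sub>m n $$ (a, b)" .
  qed (auto simp: A_def B_def)
  then have "B * A = 1\<^sub>m n" using mat_mult_left_right_inverse[OF A B] by blast
  moreover have "(\<Sum>a<n. U i a * U j a) = (B * A) $$ (i, j)"
    using assms by (simp add: A_def B_def scalar_prod_def lessThan_atLeast0)
  ultimately show ?thesis using assms by simp
qed

lemma sum_squared_coordinates_eq_sum_squares:
  fixes U :: "nat \<Rightarrow> nat \<Rightarrow> real"
  assumes rows: "\<forall>i<n. \<forall>j<n. (\<Sum>a<n. U i a * U j a) = (if i = j then 1 else 0)"
  shows "(\<Sum>a<n. (\<Sum>i<n. U i a * v i)\<^sup>2) = (\<Sum>i<n. (v i)\<^sup>2)"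
proof -
  have "(\<Sum>a<n. (\<Sum>i<n. U i a * v i)\<^sup>2) = (\<Sum>a<n. \<Sum>i<n. \<Sum>j<n. v i * v j * (U i a * U j a))"
    by (simp add: power2_eq_square sum_product mult_ac)
  also have "\<dots> = (\<Sum>i<n. \<Sum>a<n. \<Sum>j<n. v i * v j * (U i a * U j a))"
    by (rule sum.swap)
  also have "\<dots> = (\<Sum>i<n. \<Sum>j<n. v i * v j * (\<Sum>a<n. U i a * U j a))"
    unfolding sum_distrib_left by (rule sum.cong[OF refl], rule sum.swap)
  also have "\<dots> = (\<Sum>i<n. \<Sum>j<n. if i = j then (v i)\<^sup>2 else 0)"
    using rows by (intro sum.cong refl) (simp add: power2_eq_square)
  also have "\<dots> = (\<Sum>i<n. (v i)\<^sup>2)" by simp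
  finally show ?thesis .
qed

lemma quad_form_eigen_expansion:
  fixes U M :: "nat \<Rightarrow> nat \<Rightarrow> real"
  assumes rows: "\<forall>i<n. \<forall>j<n. (\<Sum>a<n. U i a * U j a) = (if i = j then 1 else 0)"
    and eig: "\<forall>a<n. \<forall>i<n. (\<Sum>j<n. M i j * U j a) = lam a * U i a"
    and sym: "\<forall>i<n. \<forall>j<n. M i j = M j i"
  shows "quad_form n M v = (\<Sum>a<n. lam a * (\<Sum>i<n. U i a * v i)\<^sup>2)"
proof -
  define c where "c a = (\<Sum>i<n. U i a * v i)" for a
  have v_expansion: "v i = (\<Sum>a<n. c a * U i a)" if "i < n" for i
  proof -
    have "(\<Sum>a<n. c a * U i a) = (\<Sum>j<n. v j * (\<Sum>a<n. U i a * U j a))"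
      unfolding c_def sum_distrib_right sum_distrib_left
      by (subst sum.swap) (simp add: mult_ac)
    also have "\<dots> = (\<Sum>j<n. if i = j then v j else 0)"
      using rows that by (intro sum.cong) auto
    finally show ?thesis using that by simp
  qed
  have M_coordinates: "(\<Sum>i<n. U i a * (\<Sum>j<n. M i j * v j)) = lam a * c a" if "a < n" for a
  proof -
    have "(\<Sum>i<n. U i a * (\<Sum>j<n. M i j * v j)) = (\<Sum>j<n. v j * (\<Sum>i<n. M j i * U i a))"
      unfolding sum_distrib_left using sym
      by (subst sum.swap) (auto intro!: sum.cong simp: mult_ac)
    also have "\<dots> = lam a * c a"
      using eig that unfolding c_def by (simp add: sum_distrib_left mult_ac)
    finally show ?thesis .
  qed
  have "quad_form n M v = (\<Sum>i<n. (\<Sum>a<n. c a * U i a) * (\<Sum>j<n. M i j * v j))"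
    unfolding quad_form_def using v_expansion by (intro sum.cong) auto
  also have "\<dots> = (\<Sum>i<n. \<Sum>a<n. c a * (U i a * (\<Sum>j<n. M i j * v j)))"
    by (simp add: sum_distrib_right mult_ac)
  also have "\<dots> = (\<Sum>a<n. c a * (\<Sum>i<n. U i a * (\<Sum>j<n. M i j * v j)))"
    by (subst sum.swap) (simp add: sum_distrib_left)
  also have "\<dots> = (\<Sum>a<n. lam a * (c a)\<^sup>2)"
    using M_coordinates by (simp add: power2_eq_square mult_ac)
  finally show ?thesis unfolding c_def .
qed

lemma bessel_inequality:
  fixes e :: "nat \<Rightarrow> nat \<Rightarrow> real"
  assumes orth: "\<forall>m<k. \<forall>m'<k. (\<Sum>p<n. e m p * e m' p) = (if m = m' then 1 else 0)"
  shows "(\<Sum>m<k. (\<Sum>p<n. u p * e m p)\<^sup>2) \<le> (\<Sum>p<n. (u p)\<^sup>2)"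
proof -
  define c where "c m = (\<Sum>p<n. u p * e m p)" for m
  define r where "r p = (\<Sum>m<k. c m * e m p)" for p
  have u_r: "(\<Sum>p<n. u p * r p) = (\<Sum>m<k. (c m)\<^sup>2)"
    unfolding r_def c_def sum_distrib_left
    by (subst sum.swap) (simp add: power2_eq_square sum_distrib_left sum_distrib_right mult_ac)
  have r_r: "(\<Sum>p<n. (r p)\<^sup>2) = (\<Sum>m<k. (c m)\<^sup>2)"
  proof -
    have "(\<Sum>p<n. (r p)\<^sup>2) = (\<Sum>p<n. \<Sum>m<k. \<Sum>m'<k. c m * c m' * (e m p * e m' p))"
      unfolding r_def by (simp add: power2_eq_square sum_product mult_ac)
    also have "\<dots> = (\<Sum>m<k. \<Sum>m'<k. c m * c m' * (\<Sum>p<n. e m p * e m' p))"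
      unfolding sum_distrib_left by (subst sum.swap) (rule sum.cong[OF refl], rule sum.swap)
    also have "\<dots> = (\<Sum>m<k. \<Sum>m'<k. if m = m' then (c m)\<^sup>2 else 0)"
      using orth by (intro sum.cong refl) (simp add: power2_eq_square)
    finally show ?thesis by simp
  qed
  have "0 \<le> (\<Sum>p<n. (u p - r p)\<^sup>2)" by (simp add: sum_nonneg)
  also have "\<dots> = (\<Sum>p<n. (u p)\<^sup>2) - 2 * (\<Sum>p<n. u p * r p) + (\<Sum>p<n. (r p)\<^sup>2)"
    by (simp add: power2_diff sum.distrib sum_subtractf sum_distrib_left mult_ac)
  finally show ?thesis unfolding u_r r_r c_def by simp
qed

lemma sorted_le_weighted_sum:
  fixes lam s :: "nat \<Rightarrow> real"
  assumes mono: "\<forall>a b. a \<le> b \<longrightarrow> b < n \<longrightarrow> lam a \<le> lam b"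
    and lam_nonneg: "\<forall>a<n. 0 \<le> lam a"
    and s_bounds: "\<forall>a<n. 0 \<le> s a \<and> s a \<le> 1"
    and s_sum: "(\<Sum>a<n. s a) = real k"
    and k: "0 < k" "k \<le> n"
  shows "lam (k - 1) \<le> (\<Sum>a<n. lam a * s a)"
proof -
  define t where "t a = s a - (if a < k - 1 then 1 else 0)" for a
  \<comment> \<open>The weights \<open>t\<close> sum to 1 and are nonpositive below index \<open>k - 1\<close>.\<close>
  have "(\<Sum>a<n. t a) = real k - (\<Sum>a<n. if a < k - 1 then 1 else 0)"
    by (simp add: t_def sum_subtractf s_sum)
  also have "(\<Sum>a<n. if a < k - 1 then 1 else (0::real)) = real (k - 1)"
  proof -
    have "{..<n} \<inter> {a. a < k - 1} = {..<k - 1}" using k by auto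
    then show ?thesis by (simp add: sum.If_cases)
  qed
  finally have "lam (k - 1) = (\<Sum>a<n. lam (k - 1) * t a)"
    using k by (simp add: sum_distrib_left[symmetric] of_nat_diff)
  also have "\<dots> \<le> (\<Sum>a<n. lam a * s a)"
  proof (rule sum_mono)
    fix a assume a: "a \<in> {..<n}"
    show "lam (k - 1) * t a \<le> lam a * s a"
    proof (cases "a < k - 1")
      case True
      have "lam (k - 1) * (s a - 1) \<le> 0"
        using lam_nonneg s_bounds k a by (intro mult_nonneg_nonpos) auto
      also have "0 \<le> lam a * s a" using lam_nonneg s_bounds a by simp
      finally show ?thesis using True by (simp add: t_def)
    next
      case False
      then show ?thesis using mono s_bounds a by (simp add: t_def mult_right_mono)
    qed
  qed
  finally show ?thesis .
qed

lemma sorted_eigenbasis_quad_form_le_sum: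
  assumes eig: "sorted_eigenbasis n M U"
    and sym: "\<forall>i<n. \<forall>j<n. M i j = M j i"
    and psd: "\<forall>v. 0 \<le> quad_form n M v"
    and orth: "\<forall>m<k. \<forall>m'<k. (\<Sum>p<n. e m p * e m' p) = (if m = m' then 1 else 0)"
    and "k \<le> n" "a < k"
  shows "quad_form n M (\<lambda>i. U i a) \<le> (\<Sum>m<k. quad_form n M (e m))"
proof -
  obtain lam where cols: "\<forall>a<n. \<forall>b<n. (\<Sum>i<n. U i a * U i b) = (if a = b then 1 else 0)"
    and mono: "\<forall>a b. a \<le> b \<longrightarrow> b < n \<longrightarrow> lam a \<le> lam b"
    and eigvec: "\<forall>a<n. \<forall>i<n. (\<Sum>j<n. M i j * U j a) = lam a * U i a"
    using eig unfolding sorted_eigenbasis_def by blast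
  have rows: "\<forall>i<n. \<forall>j<n. (\<Sum>a<n. U i a * U j a) = (if i = j then 1 else 0)"
    using orthonormal_columns_imp_orthonormal_rows[OF cols] by blast
  have lam_eq: "lam b = quad_form n M (\<lambda>i. U i b)" if "b < n" for b
  proof -
    have "quad_form n M (\<lambda>i. U i b) = (\<Sum>i<n. U i b * (lam b * U i b))"
      unfolding quad_form_def using eigvec that by simp
    also have "\<dots> = lam b * (\<Sum>i<n. U i b * U i b)" by (simp add: sum_distrib_left mult_ac)
    finally show ?thesis using cols that by simp
  qed
  define s where "s b = (\<Sum>m<k. (\<Sum>i<n. U i b * e m i)\<^sup>2)" for b
  have "(\<Sum>m<k. quad_form n M (e m)) = (\<Sum>m<k. \<Sum>b<n. lam b * (\<Sum>i<n. U i b * e m i)\<^sup>2)"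
    using quad_form_eigen_expansion[OF rows eigvec sym] by simp
  also have "\<dots> = (\<Sum>b<n. lam b * s b)"
    unfolding s_def sum_distrib_left by (rule sum.swap)
  finally have trace: "(\<Sum>m<k. quad_form n M (e m)) = (\<Sum>b<n. lam b * s b)" .
  have s_bounds: "\<forall>b<n. 0 \<le> s b \<and> s b \<le> 1"
  proof (intro allI impI conjI)
    fix b assume "b < n"
    show "0 \<le> s b" by (simp add: s_def sum_nonneg)
    have "s b \<le> (\<Sum>i<n. (U i b)\<^sup>2)"
      unfolding s_def by (rule bessel_inequality[OF orth])
    also have "\<dots> = 1" using cols \<open>b < n\<close> by (simp add: power2_eq_square)
    finally show "s b \<le> 1" .
  qed
  have "(\<Sum>b<n. s b) = (\<Sum>m<k. \<Sum>i<n. (e m i)\<^sup>2)"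
    unfolding s_def by (subst sum.swap) (simp add: sum_squared_coordinates_eq_sum_squares[OF rows])
  also have "\<dots> = real k" using orth by (simp add: power2_eq_square)
  finally have s_sum: "(\<Sum>b<n. s b) = real k" .
  have lam_nonneg: "\<forall>b<n. 0 \<le> lam b" using lam_eq psd by simp
  have "lam a \<le> lam (k - 1)" using mono assms(5,6) by simp
  also have "\<dots> \<le> (\<Sum>b<n. lam b * s b)"
    using sorted_le_weighted_sum[OF mono lam_nonneg s_bounds s_sum] assms(5,6) by simp
  finally show ?thesis using lam_eq assms(5,6) trace by simp
qed

definition dirichlet_energy :: "nat \<Rightarrow> (nat \<Rightarrow> nat \<Rightarrow> real) \<Rightarrow> (nat \<Rightarrow> real) \<Rightarrow> real" where
  "dirichlet_energy n w f = (\<Sum>p<n. \<Sum>q<n. w p q * (f p - f q)\<^sup>2) / 2"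

lemma dirichlet_energy_nonneg:
  assumes "\<forall>p q. 0 \<le> w p q"
  shows "0 \<le> dirichlet_energy n w f"
  using assms by (simp add: dirichlet_energy_def sum_nonneg)

lemma laplacian_symmetric: "laplacian K \<sigma> x n i j = laplacian K \<sigma> x n j i"
  by (simp add: laplacian_def degree_mat_def affinity_def dist_commute)

lemma quad_form_laplacian:
  "quad_form n (laplacian K \<sigma> x n) f = dirichlet_energy n (affinity K \<sigma> x) f"
proof -
  define w where "w = affinity K \<sigma> x"
  have w_sym: "w p q = w q p" for p q by (simp add: w_def affinity_def dist_commute)
  have row: "(\<Sum>j<n. laplacian K \<sigma> x n i j * f j) = (\<Sum>j<n. w i j) * f i - (\<Sum>j<n. w i j * f j)"
    if "i < n" for i
    using that by (simp add: laplacian_def degree_mat_def w_def left_diff_distrib sum_subtractf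
        if_distrib[of "\<lambda>y. y * _"] cong: if_cong)
  have "quad_form n (laplacian K \<sigma> x n) f
      = (\<Sum>p<n. \<Sum>q<n. w p q * (f p)\<^sup>2) - (\<Sum>p<n. \<Sum>q<n. w p q * f p * f q)"
    unfolding quad_form_def using row
    by (simp add: right_diff_distrib sum_subtractf sum_distrib_left sum_distrib_right
        power2_eq_square mult_ac)
  moreover have "(\<Sum>p<n. \<Sum>q<n. w p q * (f q)\<^sup>2) = (\<Sum>p<n. \<Sum>q<n. w p q * (f p)\<^sup>2)"
    by (subst sum.swap) (simp add: w_sym)
  moreover have "(\<Sum>p<n. \<Sum>q<n. w p q * (f p - f q)\<^sup>2)
      = (\<Sum>p<n. \<Sum>q<n. w p q * (f p)\<^sup>2) + (\<Sum>p<n. \<Sum>q<n. w p q * (f q)\<^sup>2)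
        - 2 * (\<Sum>p<n. \<Sum>q<n. w p q * f p * f q)"
    by (simp add: power2_diff algebra_simps sum.distrib sum_subtractf sum_distrib_left)
  ultimately show ?thesis by (simp add: dirichlet_energy_def w_def)
qed

lemma sum_sum_diff_squared:
  fixes f :: "'a \<Rightarrow> real"
  assumes "finite A"
  shows "(\<Sum>p\<in>A. \<Sum>q\<in>A. (f p - f q)\<^sup>2) = 2 * card A * (\<Sum>p\<in>A. (f p)\<^sup>2) - 2 * (\<Sum>p\<in>A. f p)\<^sup>2"
proof -
  have "(\<Sum>p\<in>A. \<Sum>q\<in>A. (f p - f q)\<^sup>2)
      = (\<Sum>p\<in>A. \<Sum>q\<in>A. (f p)\<^sup>2) + (\<Sum>p\<in>A. \<Sum>q\<in>A. (f q)\<^sup>2) - 2 * (\<Sum>p\<in>A. \<Sum>q\<in>A. f p * f q)"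
    by (simp add: power2_diff sum.distrib sum_subtractf sum_distrib_left mult.assoc)
  then show ?thesis by (simp add: power2_eq_square sum_product flip: sum_distrib_left)
qed

definition normalized_indicator :: "nat set \<Rightarrow> nat \<Rightarrow> real" where
  "normalized_indicator S p = (if p \<in> S then 1 / sqrt (card S) else 0)"

lemma normalized_indicator_orthonormal:
  assumes "finite S" "S \<noteq> {}" "S \<subseteq> {..<n}" "S = T \<or> S \<inter> T = {}"
  shows "(\<Sum>p<n. normalized_indicator S p * normalized_indicator T p) = (if S = T then 1 else 0)"
proof (cases "S = T")
  case True
  have "(\<Sum>p<n. normalized_indicator S p * normalized_indicator S p)
      = (\<Sum>p<n. if p \<in> S then 1 / card S else 0)"
    by (intro sum.cong) (auto simp: normalized_indicator_def)
  also have "\<dots> = (\<Sum>p\<in>S. 1 / card S)"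
    using assms(3) by (simp add: sum.If_cases Int_absorb1 Int_absorb2)
  finally show ?thesis using True assms(1,2) by simp
next
  case False
  then have "normalized_indicator S p * normalized_indicator T p = 0" for p
    using assms(4) by (auto simp: normalized_indicator_def)
  then have "(\<Sum>p<n. normalized_indicator S p * normalized_indicator T p) = 0"
    by (intro sum.neutral) blast
  then show ?thesis using False by simp
qed

lemma dirichlet_energy_normalized_indicator_le:
  assumes w_sym: "\<forall>p q. w p q = w q p" and S: "finite S" "S \<noteq> {}" "S \<subseteq> {..<n}"
    and cut: "\<forall>p\<in>S. \<forall>q<n. q \<notin> S \<longrightarrow> w p q \<le> \<epsilon>" and "0 \<le> \<epsilon>"
  shows "dirichlet_energy n w (normalized_indicator S) \<le> n * \<epsilon>"
proof -
  define e where "e = normalized_indicator S"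
  have "w p q * (e p - e q)\<^sup>2 \<le> \<epsilon> * (e p - e q)\<^sup>2" if "p < n" "q < n" for p q
  proof (cases "p \<in> S \<longleftrightarrow> q \<in> S")
    case True
    then show ?thesis by (auto simp: e_def normalized_indicator_def)
  next
    case False
    then have "w p q \<le> \<epsilon>" using cut w_sym that by metis
    then show ?thesis by (simp add: mult_right_mono)
  qed
  then have "(\<Sum>p<n. \<Sum>q<n. w p q * (e p - e q)\<^sup>2) \<le> (\<Sum>p<n. \<Sum>q<n. \<epsilon> * (e p - e q)\<^sup>2)"
    by (intro sum_mono) simp
  then have "dirichlet_energy n w e \<le> \<epsilon> * (\<Sum>p<n. \<Sum>q<n. (e p - e q)\<^sup>2) / 2"
    unfolding dirichlet_energy_def by (simp add: sum_distrib_left)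
  also have "(\<Sum>p<n. \<Sum>q<n. (e p - e q)\<^sup>2) = 2 * n * (\<Sum>p<n. (e p)\<^sup>2) - 2 * (\<Sum>p<n. e p)\<^sup>2"
    by (simp add: sum_sum_diff_squared)
  also have "(\<Sum>p<n. (e p)\<^sup>2) = 1"
    using normalized_indicator_orthonormal[OF S, of S] by (simp add: e_def power2_eq_square)
  finally have "dirichlet_energy n w e \<le> \<epsilon> * (2 * n - 2 * (\<Sum>p<n. e p)\<^sup>2) / 2" by simp
  moreover have "\<epsilon> * (2 * n - 2 * (\<Sum>p<n. e p)\<^sup>2) \<le> 2 * (n * \<epsilon>)"
    using \<open>0 \<le> \<epsilon>\<close> by (simp add: right_diff_distrib mult_ac)
  ultimately show ?thesis unfolding e_def by linarith
qed

lemma spanning_edges_grow: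
  fixes R :: "'a \<Rightarrow> 'a \<Rightarrow> bool" and f :: "'a \<Rightarrow> real"
  assumes S: "finite S" "i \<in> S"
    and out: "\<forall>A. i \<in> A \<longrightarrow> A \<subseteq> S \<longrightarrow> A \<noteq> S \<longrightarrow> (\<exists>p\<in>A. \<exists>q\<in>S - A. R p q)"
  shows "s < card S \<Longrightarrow> \<exists>A E. i \<in> A \<and> A \<subseteq> S \<and> card A = Suc s \<and>
    E \<subseteq> {(p, q). p \<in> A \<and> q \<in> A \<and> R p q} \<and> card E = s \<and> E \<inter> prod.swap ` E = {} \<and>
    (\<forall>q\<in>A. \<bar>f q - f i\<bar> \<le> (\<Sum>e\<in>E. \<bar>f (fst e) - f (snd e)\<bar>))"
proof (induction s)
  case 0
  show ?case by (rule exI[of _ "{i}"], rule exI[of _ "{}"]) (use S in auto)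
next
  case (Suc s)
  then obtain A E where A: "i \<in> A" "A \<subseteq> S" "card A = Suc s"
    and E: "E \<subseteq> {(p, q). p \<in> A \<and> q \<in> A \<and> R p q}" "card E = s" "E \<inter> prod.swap ` E = {}"
    and path: "\<forall>q\<in>A. \<bar>f q - f i\<bar> \<le> (\<Sum>e\<in>E. \<bar>f (fst e) - f (snd e)\<bar>)"
    by auto
  have "finite A" using A S finite_subset by blast
  then have "finite E" using E(1) finite_subset[of E "A \<times> A"] by blast
  have "A \<noteq> S" using A Suc.prems by auto
  then obtain p q where pq: "p \<in> A" "q \<in> S" "q \<notin> A" "R p q" using out A by blast
  \<comment> \<open>No old edge touches the new vertex \<open>q\<close>, so the new edge is not reversed by any edge.\<close>
  have q_fresh: "fst e \<noteq> q \<and> snd e \<noteq> q" if "e \<in> E" for e using E(1) pq(3) that by auto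
  have new: "(p, q) \<notin> E" using q_fresh by force
  have sum_insert: "(\<Sum>e\<in>insert (p, q) E. \<bar>f (fst e) - f (snd e)\<bar>)
      = \<bar>f p - f q\<bar> + (\<Sum>e\<in>E. \<bar>f (fst e) - f (snd e)\<bar>)"
    using \<open>finite E\<close> new by simp
  show ?case
  proof (intro exI conjI)
    show "i \<in> insert q A" "insert q A \<subseteq> S" using A pq by auto
    show "card (insert q A) = Suc (Suc s)" using A pq \<open>finite A\<close> by simp
    show "insert (p, q) E \<subseteq> {(p', q'). p' \<in> insert q A \<and> q' \<in> insert q A \<and> R p' q'}"
      using E pq by auto
    show "card (insert (p, q) E) = Suc s" using E \<open>finite E\<close> new by simp
    show "insert (p, q) E \<inter> prod.swap ` insert (p, q) E = {}"
      using E(3) q_fresh pq(1,3) by force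
    show "\<forall>q'\<in>insert q A. \<bar>f q' - f i\<bar> \<le> (\<Sum>e\<in>insert (p, q) E. \<bar>f (fst e) - f (snd e)\<bar>)"
      using path pq(1) unfolding sum_insert by force
  qed
qed

lemma spanning_edges:
  fixes R :: "'a \<Rightarrow> 'a \<Rightarrow> bool" and f :: "'a \<Rightarrow> real"
  assumes S: "finite S" "i \<in> S"
    and out: "\<forall>A. i \<in> A \<longrightarrow> A \<subseteq> S \<longrightarrow> A \<noteq> S \<longrightarrow> (\<exists>p\<in>A. \<exists>q\<in>S - A. R p q)"
  obtains E where "E \<subseteq> {(p, q). p \<in> S \<and> q \<in> S \<and> R p q}" "card E < card S"
    "E \<inter> prod.swap ` E = {}" "\<And>q. q \<in> S \<Longrightarrow> \<bar>f q - f i\<bar> \<le> (\<Sum>e\<in>E. \<bar>f (fst e) - f (snd e)\<bar>)"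
proof -
  have "card S > 0" using S card_gt_0_iff by blast
  then obtain A E where "A \<subseteq> S" "card A = card S"
    and E: "E \<subseteq> {(p, q). p \<in> A \<and> q \<in> A \<and> R p q}" "card E < card S" "E \<inter> prod.swap ` E = {}"
    and "\<forall>q\<in>A. \<bar>f q - f i\<bar> \<le> (\<Sum>e\<in>E. \<bar>f (fst e) - f (snd e)\<bar>)"
    using spanning_edges_grow[OF S out, of "card S - 1" f] by auto
  moreover have "A = S" using card_subset_eq[OF S(1) \<open>A \<subseteq> S\<close> \<open>card A = card S\<close>] .
  ultimately show ?thesis using that by blast
qed

lemma sum_edges_le_dirichlet_energy:
  fixes w :: "nat \<Rightarrow> nat \<Rightarrow> real"
  assumes w_sym: "\<forall>p q. w p q = w q p" and w_nonneg: "\<forall>p q. 0 \<le> w p q"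
    and E: "E \<subseteq> {..<n} \<times> {..<n}" "E \<inter> prod.swap ` E = {}"
  shows "(\<Sum>e\<in>E. w (fst e) (snd e) * (f (fst e) - f (snd e))\<^sup>2) \<le> dirichlet_energy n w f"
proof -
  define g where "g e = w (fst e) (snd e) * (f (fst e) - f (snd e))\<^sup>2" for e
  have "finite E" using E(1) finite_subset by blast
  have "(\<Sum>e\<in>prod.swap ` E. g e) = (\<Sum>e\<in>E. g e)"
    by (simp add: sum.reindex g_def w_sym power2_commute)
  then have "2 * (\<Sum>e\<in>E. g e) = (\<Sum>e\<in>E \<union> prod.swap ` E. g e)"
    using sum.union_disjoint[OF \<open>finite E\<close> finite_imageI[OF \<open>finite E\<close>] E(2), of g] by simp
  also have "\<dots> \<le> (\<Sum>e\<in>{..<n} \<times> {..<n}. g e)"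
    using E(1) w_nonneg by (intro sum_mono2) (auto simp: g_def)
  also have "\<dots> = 2 * dirichlet_energy n w f"
    by (simp add: dirichlet_energy_def sum.cartesian_product g_def split_beta)
  finally show ?thesis unfolding g_def by simp
qed

lemma dirichlet_energy_connected_bound:
  fixes w :: "nat \<Rightarrow> nat \<Rightarrow> real"
  assumes w_sym: "\<forall>p q. w p q = w q p" and w_nonneg: "\<forall>p q. 0 \<le> w p q" and "0 \<le> \<kappa>"
    and S: "S \<subseteq> {..<n}" "i \<in> S" "j \<in> S"
    and out: "\<forall>A. i \<in> A \<longrightarrow> A \<subseteq> S \<longrightarrow> A \<noteq> S \<longrightarrow> (\<exists>p\<in>A. \<exists>q\<in>S - A. \<kappa> \<le> w p q)"
  shows "\<kappa> * (f i - f j)\<^sup>2 \<le> card S * dirichlet_energy n w f"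
proof -
  have "finite S" using S(1) finite_subset by blast
  obtain E where E: "E \<subseteq> {(p, q). p \<in> S \<and> q \<in> S \<and> \<kappa> \<le> w p q}" "card E < card S"
    "E \<inter> prod.swap ` E = {}"
    and path: "\<And>q. q \<in> S \<Longrightarrow> \<bar>f q - f i\<bar> \<le> (\<Sum>e\<in>E. \<bar>f (fst e) - f (snd e)\<bar>)"
    using spanning_edges[OF \<open>finite S\<close> S(2) out, where f = f] by blast
  have "(f i - f j)\<^sup>2 \<le> (\<Sum>e\<in>E. \<bar>f (fst e) - f (snd e)\<bar>)\<^sup>2"
    using path[OF S(3)] by (simp add: power2_commute abs_le_square_iff[symmetric] power2_abs)
  also have "\<dots> \<le> (\<Sum>e\<in>E. (f (fst e) - f (snd e))\<^sup>2) * card E"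
    using sum_squared_le_sum_of_squares[of "\<lambda>e. \<bar>f (fst e) - f (snd e)\<bar>" E] by simp
  finally have "\<kappa> * (f i - f j)\<^sup>2 \<le> \<kappa> * ((\<Sum>e\<in>E. (f (fst e) - f (snd e))\<^sup>2) * card E)"
    using \<open>0 \<le> \<kappa>\<close> by (rule mult_left_mono)
  also have "\<dots> = card E * (\<Sum>e\<in>E. \<kappa> * (f (fst e) - f (snd e))\<^sup>2)"
    by (simp add: sum_distrib_left mult_ac)
  finally have chain: "\<kappa> * (f i - f j)\<^sup>2 \<le> card E * (\<Sum>e\<in>E. \<kappa> * (f (fst e) - f (snd e))\<^sup>2)" .
  have "(\<Sum>e\<in>E. \<kappa> * (f (fst e) - f (snd e))\<^sup>2)
      \<le> (\<Sum>e\<in>E. w (fst e) (snd e) * (f (fst e) - f (snd e))\<^sup>2)"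
    using E(1) by (intro sum_mono) (auto simp: mult_right_mono)
  also have "\<dots> \<le> dirichlet_energy n w f"
    using E(1,3) S(1) by (intro sum_edges_le_dirichlet_energy[OF w_sym w_nonneg]) auto
  finally have "card E * (\<Sum>e\<in>E. \<kappa> * (f (fst e) - f (snd e))\<^sup>2) \<le> card S * dirichlet_energy n w f"
    using E(2) dirichlet_energy_nonneg[OF w_nonneg]
    by (intro mult_mono) (auto simp: sum_nonneg \<open>0 \<le> \<kappa>\<close>)
  with chain show ?thesis by linarith
qed

lemma Ksig_pos:
  assumes "\<forall>t\<ge>0. K t > 0" "\<sigma> > 0" "0 \<le> t"
  shows "0 < Ksig K \<sigma> t"
  using assms by (simp add: Ksig_def)

lemma Ksig_antimono:
  assumes "\<forall>s t. 0 \<le> s \<longrightarrow> s \<le> t \<longrightarrow> K t \<le> K s" "\<sigma> > 0" "0 \<le> s" "s \<le> t"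
  shows "Ksig K \<sigma> t \<le> Ksig K \<sigma> s"
  using assms by (simp add: Ksig_def divide_right_mono)

lemma Ksig_setdist_nonneg:
  assumes "\<forall>t\<ge>0. K t > 0" "\<sigma> > 0"
  shows "0 \<le> Ksig_setdist K \<sigma> S T"
proof (cases "T = {}")
  case True
  have "0 \<le> (INF t\<in>{0..}. K t)"
    using assms(1) by (intro cINF_greatest) (auto intro: less_imp_le)
  then show ?thesis using True by (simp add: Ksig_setdist_def)
next
  case False
  then show ?thesis
    using less_imp_le[OF Ksig_pos[OF assms setdist_pos_le]] by (simp add: Ksig_setdist_def)
qed

lemma affinity_symmetric: "affinity K \<sigma> x p q = affinity K \<sigma> x q p"
  by (simp add: affinity_def dist_commute)

lemma affinity_nonneg:
  assumes "\<forall>t\<ge>0. K t > 0" "\<sigma> > 0"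
  shows "0 \<le> affinity K \<sigma> x p q"
  using Ksig_pos[OF assms zero_le_dist, of "x p" "x q"] by (simp add: affinity_def)

lemma affinity_le_Ksig_setdist:
  assumes "\<forall>s t. 0 \<le> s \<longrightarrow> s \<le> t \<longrightarrow> K t \<le> K s" "\<sigma> > 0" "x p \<in> S" "x q \<in> T"
  shows "affinity K \<sigma> x p q \<le> Ksig_setdist K \<sigma> S T"
proof -
  have "T \<noteq> {}" using assms(4) by blast
  then show ?thesis
    using Ksig_antimono[OF assms(1,2) setdist_pos_le setdist_le_dist[OF assms(3,4)]]
    by (simp add: affinity_def Ksig_setdist_def)
qed

lemma is_partition_preimage:
  assumes "is_partition (x ` A) C k"
  shows "is_partition A (\<lambda>m. {p \<in> A. x p \<in> C m}) k"
proof -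
  have ne: "\<forall>m<k. C m \<noteq> {}" and cover: "(\<Union>m<k. C m) = x ` A"
    and disj: "\<forall>l<k. \<forall>m<k. l \<noteq> m \<longrightarrow> C l \<inter> C m = {}"
    using assms unfolding is_partition_def by auto
  have "{p \<in> A. x p \<in> C m} \<noteq> {}" if m: "m < k" for m
  proof -
    obtain y where "y \<in> C m" using ne m by blast
    then have "y \<in> x ` A" using cover m by blast
    then show ?thesis using \<open>y \<in> C m\<close> by blast
  qed
  moreover have "(\<Union>m<k. {p \<in> A. x p \<in> C m}) = A" using cover by fastforce
  moreover have "{p \<in> A. x p \<in> C l} \<inter> {p \<in> A. x p \<in> C m} = {}" if "l < k" "m < k" "l \<noteq> m" for l m
    using disj that by blast
  ultimately show ?thesis unfolding is_partition_def by blast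
qed

lemma is_partition_card_le:
  assumes "is_partition A P k" "finite A"
  shows "k \<le> card A"
proof -
  define r where "r m = (SOME p. p \<in> P m)" for m
  have r: "r m \<in> P m" if "m < k" for m
    using assms(1) that unfolding is_partition_def r_def by (simp add: some_in_eq)
  have "inj_on r {..<k}"
  proof (rule inj_onI)
    fix m m' assume "m \<in> {..<k}" "m' \<in> {..<k}" "r m = r m'"
    then have "P m \<inter> P m' \<noteq> {}" using r by (metis disjoint_iff lessThan_iff)
    then show "m = m'" using assms(1) \<open>m \<in> {..<k}\<close> \<open>m' \<in> {..<k}\<close> unfolding is_partition_def by blast
  qed
  moreover have "r ` {..<k} \<subseteq> A" using r assms(1) unfolding is_partition_def by auto
  ultimately show ?thesis using card_inj_on_le[of r "{..<k}" A] assms(2) by simp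
qed

lemma connected_at_dist_preimage_edge:
  assumes conn: "connected_at_dist C \<delta>" and C: "C \<subseteq> x ` A" "finite A" "inj_on x A"
    and B: "B \<subseteq> {p \<in> A. x p \<in> C}" "B \<noteq> {}" "B \<noteq> {p \<in> A. x p \<in> C}"
  shows "\<exists>p\<in>B. \<exists>q\<in>{p \<in> A. x p \<in> C} - B. dist (x p) (x q) \<le> \<delta>"
proof -
  define C1 where "C1 = x ` B"
  define C2 where "C2 = C - x ` B"
  obtain q0 where q0: "q0 \<in> A" "x q0 \<in> C" "q0 \<notin> B" using B by blast
  have "x q0 \<notin> x ` B" using q0 B(1) C(3) by (auto dest: inj_onD)
  then have "C2 \<noteq> {}" using q0 by (auto simp: C2_def)
  moreover have "C1 \<noteq> {}" "C1 \<union> C2 = C" "C1 \<inter> C2 = {}" using B by (auto simp: C1_def C2_def)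
  ultimately have "\<not> setdist C1 C2 > \<delta>" using conn unfolding connected_at_dist_def by blast
  have "finite C" using finite_subset[OF C(1) finite_imageI[OF C(2)]] .
  then have "finite C1" "finite C2" using \<open>C1 \<union> C2 = C\<close> finite_Un by metis+
  define D where "D = {dist a b |a b. a \<in> C1 \<and> b \<in> C2}"
  have "finite D" unfolding D_def
    using finite_image_set2[of "\<lambda>a. a \<in> C1" "\<lambda>b. b \<in> C2" dist] \<open>finite C1\<close> \<open>finite C2\<close> by simp
  moreover have "D \<noteq> {}" using \<open>C1 \<noteq> {}\<close> \<open>C2 \<noteq> {}\<close> unfolding D_def by blast
  moreover have "setdist C1 C2 = Inf D"
    using \<open>C1 \<noteq> {}\<close> \<open>C2 \<noteq> {}\<close> unfolding setdist_def D_def by simp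
  ultimately have "setdist C1 C2 \<in> D" using Min_in by (simp add: cInf_eq_Min)
  then obtain a b where ab: "a \<in> C1" "b \<in> C2" "dist a b = setdist C1 C2"
    unfolding D_def by force
  obtain p where "p \<in> B" "a = x p" using ab(1) unfolding C1_def by blast
  obtain q where q: "q \<in> A" "b = x q" using ab(2) C(1) unfolding C2_def by blast
  have "x q \<in> C" "x q \<notin> x ` B" using ab(2) q(2) unfolding C2_def by simp_all
  then have "q \<in> {p \<in> A. x p \<in> C} - B" using q(1) by blast
  moreover have "dist (x p) (x q) \<le> \<delta>"
    using ab(3) \<open>a = x p\<close> q(2) \<open>\<not> setdist C1 C2 > \<delta>\<close> by simp
  ultimately show ?thesis using \<open>p \<in> B\<close> by blast
qed

lemma row_dist_le_of_coordinate_bound: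
  fixes k n :: nat and \<kappa> \<epsilon> :: real and U :: "nat \<Rightarrow> nat \<Rightarrow> real"
  assumes "0 < \<kappa>" "0 \<le> \<epsilon>" "k \<le> n"
    and coord: "\<forall>a<k. \<kappa> * (U i a - U j a)\<^sup>2 \<le> real n * (real k * real n * \<epsilon>)"
  shows "row_dist U k i j \<le> n powr 1.5 * k powr 0.5 * sqrt (\<epsilon> / \<kappa>)"
proof -
  have "(\<Sum>a<k. (U i a - U j a)\<^sup>2) \<le> (\<Sum>a<k. real n * (real k * real n * \<epsilon>) / \<kappa>)"
    using coord \<open>0 < \<kappa>\<close> by (intro sum_mono) (simp add: pos_le_divide_eq mult.commute)
  also have "\<dots> = real k * (real k * real n ^ 2 * \<epsilon> / \<kappa>)" by (simp add: power2_eq_square mult_ac)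
  also have "\<dots> \<le> real k * (real n * real n ^ 2 * \<epsilon> / \<kappa>)"
    using assms(1-3) by (intro mult_left_mono divide_right_mono mult_right_mono) auto
  also have "\<dots> = real n ^ 3 * real k * (\<epsilon> / \<kappa>)" by (simp add: power3_eq_cube power2_eq_square)
  finally have "row_dist U k i j \<le> sqrt (n ^ 3) * sqrt k * sqrt (\<epsilon> / \<kappa>)"
    unfolding row_dist_def by (simp flip: real_sqrt_mult)
  moreover have "real n powr 1.5 = sqrt (n ^ 3)"
    using powr_half_sqrt_powr[of "real n" 3] by (simp add: powr_realpow')
  moreover have "real k powr 0.5 = sqrt k" using powr_half_sqrt[of "real k"] by simp
  ultimately show ?thesis by simp
qed

lemma is_partition_normalized_indicators_orthonormal:
  assumes "is_partition {..<n} P k" "m < k" "m' < k"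
  shows "(\<Sum>p<n. normalized_indicator (P m) p * normalized_indicator (P m') p) = (if m = m' then 1 else 0)"
proof -
  have sub: "P m \<subseteq> {..<n}" and ne: "P m \<noteq> {}"
    and disj: "m \<noteq> m' \<Longrightarrow> P m \<inter> P m' = {}"
    using assms unfolding is_partition_def by auto
  then have "finite (P m)" using finite_subset by blast
  moreover have "P m = P m' \<longleftrightarrow> m = m'" using ne disj by auto
  ultimately show ?thesis
    using normalized_indicator_orthonormal[OF _ ne sub, of "P m'"] disj by auto
qed

lemma laplacian_low_eigenvector_energy_le:
  fixes x :: "nat \<Rightarrow> 'a::metric_space"
  assumes K_pos: "\<forall>t\<ge>0. K t > 0"
    and K_noninc: "\<forall>s t. 0 \<le> s \<longrightarrow> s \<le> t \<longrightarrow> K t \<le> K s"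
    and sigma: "\<sigma> > 0"
    and part: "is_partition (x ` {..<n}) C k"
    and eig: "sorted_eigenbasis n (laplacian K \<sigma> x n) U"
    and cut: "\<forall>m<k. Ksig_setdist K \<sigma> (C m) (x ` {..<n} - C m) \<le> \<epsilon>"
    and "a < k"
  shows "quad_form n (laplacian K \<sigma> x n) (\<lambda>p. U p a) \<le> k * (n * \<epsilon>)"
proof -
  define P where "P m = {p \<in> {..<n}. x p \<in> C m}" for m
  define e where "e m = normalized_indicator (P m)" for m
  have P: "is_partition {..<n} P k" unfolding P_def by (rule is_partition_preimage[OF part])
  have w_sym: "\<forall>p q. affinity K \<sigma> x p q = affinity K \<sigma> x q p" using affinity_symmetric by blast
  have w_nonneg: "\<forall>p q. 0 \<le> affinity K \<sigma> x p q" by (simp add: affinity_nonneg[OF K_pos sigma])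
  have "0 \<le> Ksig_setdist K \<sigma> (C a) (x ` {..<n} - C a)" by (rule Ksig_setdist_nonneg[OF K_pos sigma])
  also have "\<dots> \<le> \<epsilon>" using cut \<open>a < k\<close> by simp
  finally have "0 \<le> \<epsilon>" .
  have "quad_form n (laplacian K \<sigma> x n) (\<lambda>p. U p a) \<le> (\<Sum>m<k. quad_form n (laplacian K \<sigma> x n) (e m))"
  proof (rule sorted_eigenbasis_quad_form_le_sum[OF eig])
    show "\<forall>v. 0 \<le> quad_form n (laplacian K \<sigma> x n) v"
      by (simp add: quad_form_laplacian dirichlet_energy_nonneg[OF w_nonneg])
    show "\<forall>m<k. \<forall>m'<k. (\<Sum>p<n. e m p * e m' p) = (if m = m' then 1 else 0)"
      unfolding e_def using is_partition_normalized_indicators_orthonormal[OF P] by blast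
    show "k \<le> n" using is_partition_card_le[OF P] by simp
  qed (use laplacian_symmetric \<open>a < k\<close> in auto)
  also have "\<dots> \<le> (\<Sum>m<k. n * \<epsilon>)"
  proof (rule sum_mono)
    fix m assume m: "m \<in> {..<k}"
    have "P m \<subseteq> {..<n}" "P m \<noteq> {}" using P m unfolding is_partition_def by blast+
    moreover have "finite (P m)" using finite_subset[OF \<open>P m \<subseteq> {..<n}\<close>] by simp
    moreover have "affinity K \<sigma> x p q \<le> \<epsilon>" if "p \<in> P m" "q < n" "q \<notin> P m" for p q
    proof -
      have "x p \<in> C m" "x q \<in> x ` {..<n} - C m" using that unfolding P_def by auto
      then have "affinity K \<sigma> x p q \<le> Ksig_setdist K \<sigma> (C m) (x ` {..<n} - C m)"
        by (rule affinity_le_Ksig_setdist[OF K_noninc sigma])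
      also have "\<dots> \<le> \<epsilon>" using cut m by simp
      finally show ?thesis .
    qed
    ultimately have "dirichlet_energy n (affinity K \<sigma> x) (e m) \<le> n * \<epsilon>"
      unfolding e_def using w_sym \<open>0 \<le> \<epsilon>\<close>
      by (intro dirichlet_energy_normalized_indicator_le) blast+
    then show "quad_form n (laplacian K \<sigma> x n) (e m) \<le> n * \<epsilon>" by (simp add: quad_form_laplacian)
  qed
  finally show ?thesis by simp
qed

lemma laplacian_quad_form_bounds_cluster_variation:
  fixes x :: "nat \<Rightarrow> 'a::metric_space"
  assumes K_pos: "\<forall>t\<ge>0. K t > 0"
    and K_noninc: "\<forall>s t. 0 \<le> s \<longrightarrow> s \<le> t \<longrightarrow> K t \<le> K s"
    and sigma: "\<sigma> > 0"
    and inj: "inj_on x {..<n}"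
    and C: "C \<subseteq> x ` {..<n}" "connected_at_dist C \<delta>" "0 \<le> \<delta>"
    and ij: "i < n" "j < n" "x i \<in> C" "x j \<in> C"
  shows "Ksig K \<sigma> \<delta> * (f i - f j)\<^sup>2 \<le> n * quad_form n (laplacian K \<sigma> x n) f"
proof -
  define S where "S = {p \<in> {..<n}. x p \<in> C}"
  have "\<exists>p\<in>A. \<exists>q\<in>S - A. Ksig K \<sigma> \<delta> \<le> affinity K \<sigma> x p q"
    if A: "i \<in> A" "A \<subseteq> S" "A \<noteq> S" for A
  proof -
    obtain p q where "p \<in> A" "q \<in> S - A" "dist (x p) (x q) \<le> \<delta>"
      using connected_at_dist_preimage_edge[OF C(2,1) _ inj, of A] A unfolding S_def by blast
    then show ?thesis
      using Ksig_antimono[OF K_noninc sigma zero_le_dist] unfolding affinity_def by blast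
  qed
  then have out: "\<forall>A. i \<in> A \<longrightarrow> A \<subseteq> S \<longrightarrow> A \<noteq> S \<longrightarrow>
      (\<exists>p\<in>A. \<exists>q\<in>S - A. Ksig K \<sigma> \<delta> \<le> affinity K \<sigma> x p q)" by blast
  have w_sym: "\<forall>p q. affinity K \<sigma> x p q = affinity K \<sigma> x q p" using affinity_symmetric by blast
  have w_nonneg: "\<forall>p q. 0 \<le> affinity K \<sigma> x p q" by (simp add: affinity_nonneg[OF K_pos sigma])
  have "0 \<le> Ksig K \<sigma> \<delta>" using Ksig_pos[OF K_pos sigma C(3)] by simp
  moreover have "S \<subseteq> {..<n}" "i \<in> S" "j \<in> S" using ij unfolding S_def by auto
  ultimately have "Ksig K \<sigma> \<delta> * (f i - f j)\<^sup>2 \<le> card S * dirichlet_energy n (affinity K \<sigma> x) f"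
    using dirichlet_energy_connected_bound[OF w_sym w_nonneg] out by blast
  also have "\<dots> \<le> n * dirichlet_energy n (affinity K \<sigma> x) f"
    using card_mono[OF _ \<open>S \<subseteq> {..<n}\<close>] dirichlet_energy_nonneg[OF w_nonneg]
    by (intro mult_right_mono) auto
  finally show ?thesis by (simp add: quad_form_laplacian)
qed

theorem lemma1:
  fixes K :: "real \<Rightarrow> real" and \<sigma> :: real
    and x :: "nat \<Rightarrow> real ^ 'd" and n k :: nat
    and C :: "nat \<Rightarrow> (real ^ 'd) set" and \<delta> :: "nat \<Rightarrow> real"
    and U :: "nat \<Rightarrow> nat \<Rightarrow> real" and i j l :: nat
  assumes K_pos: "\<forall>t\<ge>0. K t > 0"
    and K_noninc: "\<forall>s t. 0 \<le> s \<longrightarrow> s \<le> t \<longrightarrow> K t \<le> K s"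
    and K0: "K 0 = 1"
    and sigma: "\<sigma> > 0"
    and distinct_pts: "inj_on x {..<n}"
    and part: "is_partition (x ` {..<n}) C k"
    and delta_nonneg: "\<forall>m<k. \<delta> m \<ge> 0"
    and conn: "\<forall>m<k. connected_at_dist (C m) (\<delta> m)"
    and eig: "sorted_eigenbasis n (laplacian K \<sigma> x n) U"
    and ij: "i < n" "j < n" and lk: "l < k"
    and mem: "x i \<in> C l" "x j \<in> C l"
  shows "row_dist U k i j \<le>
    Max ((\<lambda>m. real n powr 1.5 * real k powr 0.5 *
              sqrt (Ksig_setdist K \<sigma> (C m) (x ` {..<n} - C m) / Ksig K \<sigma> (\<delta> l))) ` {..<k})"
proof -
  define \<epsilon> where "\<epsilon> m = Ksig_setdist K \<sigma> (C m) (x ` {..<n} - C m)" for m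
  obtain ms where ms: "ms < k" "\<epsilon> ms = Max (\<epsilon> ` {..<k})"
    using Max_in[of "\<epsilon> ` {..<k}"] lk by fastforce
  have "C l \<subseteq> x ` {..<n}" using part lk unfolding is_partition_def by blast
  have coord: "Ksig K \<sigma> (\<delta> l) * (U i a - U j a)\<^sup>2 \<le> real n * (real k * real n * \<epsilon> ms)"
    if "a < k" for a
  proof -
    have "Ksig K \<sigma> (\<delta> l) * (U i a - U j a)\<^sup>2 \<le> n * quad_form n (laplacian K \<sigma> x n) (\<lambda>p. U p a)"
      using \<open>C l \<subseteq> x ` {..<n}\<close> conn delta_nonneg lk
      by (intro laplacian_quad_form_bounds_cluster_variation[OF K_pos K_noninc sigma distinct_pts _ _ _ ij mem])
        auto
    also have "\<dots> \<le> n * (k * (n * \<epsilon> ms))"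
      using laplacian_low_eigenvector_energy_le[OF K_pos K_noninc sigma part eig _ that] ms(2)
      by (intro mult_left_mono) (auto simp: \<epsilon>_def)
    finally show ?thesis by (simp add: mult_ac)
  qed
  have "row_dist U k i j \<le> n powr 1.5 * k powr 0.5 * sqrt (\<epsilon> ms / Ksig K \<sigma> (\<delta> l))"
  proof (rule row_dist_le_of_coordinate_bound)
    show "0 < Ksig K \<sigma> (\<delta> l)" using Ksig_pos[OF K_pos sigma] delta_nonneg lk by simp
    show "0 \<le> \<epsilon> ms" unfolding \<epsilon>_def by (rule Ksig_setdist_nonneg[OF K_pos sigma])
    show "k \<le> n" using is_partition_card_le[OF is_partition_preimage[OF part]] by simp
  qed (use coord in blast)
  also have "\<dots> \<le> Max ((\<lambda>m. real n powr 1.5 * real k powr 0.5 *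
              sqrt (\<epsilon> m / Ksig K \<sigma> (\<delta> l))) ` {..<k})"
    using ms(1) by (intro Max_ge) auto
  finally show ?thesis unfolding \<epsilon>_def .
qed

end
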